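(* With the notation of the context, for all fixed frequencies, $$|S^{\rm good}_{kk_2}|\lesssim1,\qquad |S^{\rm good}_{k_1k_3}|\lesssim1,\qquad |S^{\rm bad}_{kk_2}|\lesssim|k+k_2|^{1-\frac\alpha2}+1,\qquad |S^{\rm bad}_{k_1k_3}|\lesssim|k_1+k_3|^{1-\frac\alpha2}+1.$$
   Context: Fix $\alpha\in(1,2)$, dyadic numbers $1\le N_1,N_2,N_3\le N$, a real number $m$ and a constant $C_0>0$. Let $S$ be the set of $(k,k_1,k_2,k_3)\in\mathbb Z^4$ with $k=k_1-k_2+k_3$, $k_2\notin\{k_1,k_3\}$, $\big||k_1|^\alpha-|k_2|^\alpha+|k_3|^\alpha-|k|^\alpha-m\big|\le C_0$, $|k|\le N$ and $|k_j|\le N_j$ for $j=1,2,3$. Let $S_{k_1k_3}=\{(k,k_2):(k,k_1,k_2,k_3)\in S\}$ and $S_{kk_2}=\{(k_1,k_3):(k,k_1,k_2,k_3)\in S\}$. Fix a small absolute constant $c\in(0,1)$ and set $S^{\rm bad}_{k_1k_3}=\{(k,k_2)\in S_{k_1k_3}:|2k-(k_1+k_3)|<c|k_1+k_3|\}$, $S^{\rm good}_{k_1k_3}=S_{k_1k_3}\setminus S^{\rm bad}_{k_1k_3}$, $S^{\rm bad}_{kk_2}=\{(k_1,k_3)\in S_{kk_2}:|2k_1-(k+k_2)|<c|k+k_2|\}$, $S^{\rm good}_{kk_2}=S_{kk_2}\setminus S^{\rm bad}_{kk_2}$. $|A|$ is cardinality. $A\lesssim B$ means $A\le CB$ with $C$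 depending only on $\alpha$, $c$ and $C_0$. *)

theory Defs
  imports Complex_Main
begin

definition dyadic :: "nat \<Rightarrow> bool" where
  "dyadic N \<longleftrightarrow> (\<exists>j::nat. N = 2 ^ j)"

definition Sset :: "real \<Rightarrow> real \<Rightarrow> real \<Rightarrow> nat \<Rightarrow> nat \<Rightarrow> nat \<Rightarrow> nat
    \<Rightarrow> (int \<times> int \<times> int \<times> int) set" where
  "Sset \<alpha> m C0 N N1 N2 N3 = {(k,k1,k2,k3). k = k1 - k2 + k3 \<and> k2 \<noteq> k1 \<and> k2 \<noteq> k3 \<and>
     \<bar>\<bar>real_of_int k1\<bar> powr \<alpha> - \<bar>real_of_int k2\<bar> powr \<alpha> + \<bar>real_of_int k3\<bar> powr \<alpha>
        - \<bar>real_of_int k\<bar> powr \<alpha> - m\<bar> \<le> C0 \<and>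
     \<bar>k\<bar> \<le> int N \<and> \<bar>k1\<bar> \<le> int N1 \<and> \<bar>k2\<bar> \<le> int N2 \<and> \<bar>k3\<bar> \<le> int N3}"

definition S_k1k3 where
  "S_k1k3 \<alpha> m C0 N N1 N2 N3 k1 k3 = {(k,k2). (k,k1,k2,k3) \<in> Sset \<alpha> m C0 N N1 N2 N3}"

definition S_kk2 where
  "S_kk2 \<alpha> m C0 N N1 N2 N3 k k2 = {(k1,k3). (k,k1,k2,k3) \<in> Sset \<alpha> m C0 N N1 N2 N3}"

definition S_k1k3_bad where
  "S_k1k3_bad \<alpha> c m C0 N N1 N2 N3 k1 k3 = {(k,k2) \<in> S_k1k3 \<alpha> m C0 N N1 N2 N3 k1 k3.
      real_of_int \<bar>2*k - (k1+k3)\<bar> < c * real_of_int \<bar>k1+k3\<bar>}"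

definition S_k1k3_good where
  "S_k1k3_good \<alpha> c m C0 N N1 N2 N3 k1 k3 =
     S_k1k3 \<alpha> m C0 N N1 N2 N3 k1 k3 - S_k1k3_bad \<alpha> c m C0 N N1 N2 N3 k1 k3"

definition S_kk2_bad where
  "S_kk2_bad \<alpha> c m C0 N N1 N2 N3 k k2 = {(k1,k3) \<in> S_kk2 \<alpha> m C0 N N1 N2 N3 k k2.
      real_of_int \<bar>2*k1 - (k+k2)\<bar> < c * real_of_int \<bar>k+k2\<bar>}"

definition S_kk2_good where
  "S_kk2_good \<alpha> c m C0 N N1 N2 N3 k k2 =
     S_kk2 \<alpha> m C0 N N1 N2 N3 k k2 - S_kk2_bad \<alpha> c m C0 N N1 N2 N3 k k2"

end

theory Submission
  imports Defs
begin

text \<open>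
Write \<open>s = k + k\<^sub>2\<close> and \<open>S = |s|\<close>. On \<open>S\<^sub>k\<^sub>k\<^sub>2\<close> the frequency \<open>k\<^sub>3 = s - k\<^sub>1\<close>
is determined by \<open>k\<^sub>1\<close>, and \<open>|k\<^sub>1|\<^sup>\<alpha> + |k\<^sub>3|\<^sup>\<alpha>\<close> depends only on \<open>S\<close> and \<open>w = |2k\<^sub>1 - s|\<close>.
The resonance condition confines this value to a window of width \<open>2C\<^sub>0\<close>, and it is increasing in
\<open>w\<close> with a quantitative rate: like \<open>S\<^sup>\<alpha>\<^sup>-\<^sup>2 w\<^sup>2\<close> for \<open>w \<le> S\<close> (strict convexity of \<open>t\<^sup>\<alpha>\<close>) and
like \<open>(w - S)\<^sup>\<alpha>\<close> beyond. Hence the admissible \<open>w\<close> lie in an interval of length \<open>O(1)\<close>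
when \<open>w \<ge> cS\<close> and of length \<open>O(S\<^sup>1\<^sup>-\<^sup>\<alpha>\<^sup>/\<^sup>2)\<close> when \<open>w < cS\<close>, and each \<open>w\<close> comes from at most
two \<open>k\<^sub>1\<close>. The sets \<open>S\<^sub>k\<^sub>1\<^sub>k\<^sub>3\<close> are the sets \<open>S\<^sub>k\<^sub>k\<^sub>2\<close> with the roles of the pairs
\<open>(k, k\<^sub>2)\<close> and \<open>(k\<^sub>1, k\<^sub>3)\<close> exchanged and \<open>m\<close> replaced by \<open>-m\<close>.
\<close>

lemma concave_powr_diff_ge:
  fixes p a b S :: real
  assumes "0 < p" "p \<le> 1" "0 < b" "b \<le> a" "a \<le> S"
  shows "p * S powr (p - 1) * (a - b) \<le> a powr p - b powr p"
proof -
  define f where "f t = t powr p - p * S powr (p - 1) * t" for t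
  have "f b \<le> f a"
  proof (rule DERIV_nonneg_imp_increasing_open[OF assms(4)])
    fix t assume t: "b < t" "t < a"
    have "DERIV f t :> p * t powr (p - 1) - p * S powr (p - 1)"
      unfolding f_def using t assms by (auto intro!: derivative_eq_intros)
    moreover have "p * S powr (p - 1) \<le> p * t powr (p - 1)"
      using t assms by (intro mult_left_mono powr_mono2') auto
    ultimately show "\<exists>y. DERIV f t :> y \<and> 0 \<le> y" by force
  next
    show "continuous_on {b..a} f" unfolding f_def using assms by (auto intro!: continuous_intros)
  qed
  then show ?thesis unfolding f_def by (simp add: algebra_simps)
qed

lemma add_powr_le_powr_add:
  fixes a b \<alpha> :: real
  assumes "1 \<le> \<alpha>" "0 \<le> a" "0 \<le> b"
  shows "a powr \<alpha> + b powr \<alpha> \<le> (a + b) powr \<alpha>"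
proof -
  have split: "x powr \<alpha> = x * x powr (\<alpha> - 1)" if "0 \<le> x" for x :: real
    using that powr_add[of x 1 "\<alpha> - 1"] by simp
  have "a * a powr (\<alpha> - 1) + b * b powr (\<alpha> - 1) \<le> a * (a + b) powr (\<alpha> - 1) + b * (a + b) powr (\<alpha> - 1)"
    using assms by (intro add_mono mult_left_mono powr_mono2) auto
  then show ?thesis using assms by (simp add: split distrib_right)
qed

text \<open>\<open>|x|\<^sup>\<alpha> + |y|\<^sup>\<alpha> = powr_pair \<alpha> |x + y| |x - y|\<close>.\<close>

definition powr_pair :: "real \<Rightarrow> real \<Rightarrow> real \<Rightarrow> real" where
  "powr_pair \<alpha> S w = ((S + w) / 2) powr \<alpha> + (\<bar>S - w\<bar> / 2) powr \<alpha>"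

lemma abs_powr_add_eq_powr_pair:
  fixes x s \<alpha> :: real
  shows "\<bar>x\<bar> powr \<alpha> + \<bar>s - x\<bar> powr \<alpha> = powr_pair \<alpha> \<bar>s\<bar> \<bar>2 * x - s\<bar>"
proof -
  have "((\<bar>s\<bar> + \<bar>2 * x - s\<bar>) / 2 = \<bar>x\<bar> \<and> \<bar>\<bar>s\<bar> - \<bar>2 * x - s\<bar>\<bar> / 2 = \<bar>s - x\<bar>) \<or>
        ((\<bar>s\<bar> + \<bar>2 * x - s\<bar>) / 2 = \<bar>s - x\<bar> \<and> \<bar>\<bar>s\<bar> - \<bar>2 * x - s\<bar>\<bar> / 2 = \<bar>x\<bar>)"
    by (cases "0 \<le> s"; cases "s \<le> 2 * x"; cases "0 \<le> x"; cases "x \<le> s"; simp add: abs_if field_simps)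
  then show ?thesis unfolding powr_pair_def by auto
qed

lemma powr_pair_increment_inner:
  fixes \<alpha> S w w' :: real
  assumes "1 < \<alpha>" "\<alpha> < 2" "0 < S" "0 \<le> w" "w \<le> w'" "w' \<le> S"
  shows "\<alpha> * (\<alpha> - 1) * S powr (\<alpha> - 2) / 4 * (w'\<^sup>2 - w\<^sup>2)
           \<le> powr_pair \<alpha> S w' - powr_pair \<alpha> S w"
proof -
  define \<kappa> where "\<kappa> = \<alpha> * (\<alpha> - 1) * S powr (\<alpha> - 2) / 4"
  define Q where "Q t = ((S + t) / 2) powr \<alpha> + ((S - t) / 2) powr \<alpha> - \<kappa> * t\<^sup>2" for t
  have "Q w \<le> Q w'"
  proof (rule DERIV_nonneg_imp_increasing_open[OF assms(5)])
    fix t assume t: "w < t" "t < w'"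
    define \<delta> where "\<delta> = ((S + t) / 2) powr (\<alpha> - 1) - ((S - t) / 2) powr (\<alpha> - 1)"
    have "DERIV Q t :> \<alpha> / 2 * \<delta> - 2 * \<kappa> * t"
      unfolding Q_def \<delta>_def using t assms
      by (auto intro!: derivative_eq_intros simp: field_simps)
    moreover have "(\<alpha> - 1) * S powr (\<alpha> - 2) * t \<le> \<delta>"
      using concave_powr_diff_ge[of "\<alpha> - 1" "(S - t) / 2" "(S + t) / 2" S] t assms
      by (simp add: \<delta>_def field_simps)
    then have "\<alpha> / 2 * ((\<alpha> - 1) * S powr (\<alpha> - 2) * t) \<le> \<alpha> / 2 * \<delta>"
      using assms by (intro mult_left_mono) auto
    moreover have "2 * \<kappa> * t = \<alpha> / 2 * ((\<alpha> - 1) * S powr (\<alpha> - 2) * t)"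
      unfolding \<kappa>_def by (simp add: field_simps)
    ultimately show "\<exists>y. DERIV Q t :> y \<and> 0 \<le> y" by force
  next
    show "continuous_on {w..w'} Q" unfolding Q_def using assms
      by (auto intro!: continuous_intros continuous_on_powr')
  qed
  moreover have abs_eq: "\<bar>S - w\<bar> = S - w" "\<bar>S - w'\<bar> = S - w'" using assms by auto
  ultimately have "\<kappa> * (w'\<^sup>2 - w\<^sup>2) \<le> powr_pair \<alpha> S w' - powr_pair \<alpha> S w"
    unfolding Q_def powr_pair_def abs_eq by (simp add: algebra_simps)
  then show ?thesis unfolding \<kappa>_def .
qed

lemma powr_pair_increment_outer:
  fixes \<alpha> S w w' :: real
  assumes "1 < \<alpha>" "0 \<le> S" "S \<le> w" "w \<le> w'"
  shows "((w' - w) / 2) powr \<alpha> \<le> powr_pair \<alpha> S w' - powr_pair \<alpha> S w"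
proof -
  have "((S + w) / 2) powr \<alpha> + ((w' - w) / 2) powr \<alpha> \<le> ((S + w) / 2 + (w' - w) / 2) powr \<alpha>"
    using assms by (intro add_powr_le_powr_add) auto
  also have "(S + w) / 2 + (w' - w) / 2 = (S + w') / 2" by (simp add: field_simps)
  finally show ?thesis
    using assms powr_mono2[of \<alpha> "\<bar>S - w\<bar> / 2" "\<bar>S - w'\<bar> / 2"] unfolding powr_pair_def by simp
qed

lemma powr_pair_mono:
  fixes \<alpha> S w w' :: real
  assumes "1 < \<alpha>" "\<alpha> < 2" "0 \<le> S" "0 \<le> w" "w \<le> w'"
  shows "powr_pair \<alpha> S w \<le> powr_pair \<alpha> S w'"
proof -
  have outer: "powr_pair \<alpha> S u \<le> powr_pair \<alpha> S u'" if "S \<le> u" "u \<le> u'" for u u'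
    using powr_pair_increment_outer[OF assms(1,3) that] powr_ge_zero[of "(u' - u) / 2" \<alpha>] by linarith
  have inner: "powr_pair \<alpha> S u \<le> powr_pair \<alpha> S u'" if "0 \<le> u" "u \<le> u'" "u' \<le> S" for u u'
  proof (cases "S = 0")
    case True then show ?thesis using that outer by simp
  next
    case False
    have "0 \<le> \<alpha> * (\<alpha> - 1) * S powr (\<alpha> - 2) / 4 * (u'\<^sup>2 - u\<^sup>2)"
      using assms that by (simp add: power_mono)
    then show ?thesis using powr_pair_increment_inner[OF assms(1,2) _ that] False assms(3) by simp
  qed
  show ?thesis
  proof (cases "w' \<le> S \<or> S \<le> w")
    case True then show ?thesis using inner outer assms by blast
  next
    case False
    then show ?thesis using inner[of w S] outer[of S w'] assms by fastforce
  qed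
qed

lemma powr_pair_gap_inner:
  fixes \<alpha> S c w w' D :: real
  assumes "1 < \<alpha>" "\<alpha> < 2" "1 \<le> S" "0 < c" "c * S \<le> w" "w \<le> w'" "w' \<le> S"
    and "powr_pair \<alpha> S w' - powr_pair \<alpha> S w \<le> D"
  shows "w' - w \<le> 2 * D / (\<alpha> * (\<alpha> - 1) * c)"
proof -
  define \<kappa> where "\<kappa> = \<alpha> * (\<alpha> - 1) * S powr (\<alpha> - 2) / 4"
  have "0 \<le> \<kappa>" "0 \<le> w" using assms unfolding \<kappa>_def by (auto intro: order_trans[OF _ assms(5)])
  have "\<alpha> * (\<alpha> - 1) * c / 2 * (w' - w) \<le> \<alpha> * (\<alpha> - 1) * c / 2 * S powr (\<alpha> - 1) * (w' - w)"
    using assms ge_one_powr_ge_zero[of S "\<alpha> - 1"] by (intro mult_right_mono) auto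
  also have "\<dots> = \<kappa> * (w' - w) * (2 * c * S)"
    using assms powr_add[of S "\<alpha> - 2" 1] unfolding \<kappa>_def by (simp add: field_simps)
  also have "\<dots> \<le> \<kappa> * (w' - w) * (w' + w)"
    using assms \<open>0 \<le> \<kappa>\<close> by (intro mult_left_mono) auto
  also have "\<dots> = \<kappa> * (w'\<^sup>2 - w\<^sup>2)" by (simp add: power2_eq_square algebra_simps)
  also have "\<dots> \<le> D"
    using powr_pair_increment_inner[OF assms(1,2) _ \<open>0 \<le> w\<close> assms(6,7)] assms(3,8)
    unfolding \<kappa>_def by simp
  finally show ?thesis using assms by (simp add: pos_le_divide_eq mult.commute)
qed

lemma powr_pair_gap_outer:
  fixes \<alpha> S w w' D :: real
  assumes "1 < \<alpha>" "0 \<le> S" "S \<le> w" "w \<le> w'" "0 \<le> D"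
    and "powr_pair \<alpha> S w' - powr_pair \<alpha> S w \<le> D"
  shows "w' - w \<le> 2 * D + 2"
proof (cases "1 \<le> (w' - w) / 2")
  case True
  have "(w' - w) / 2 \<le> ((w' - w) / 2) powr \<alpha>"
    using True assms powr_mono[of 1 \<alpha> "(w' - w) / 2"] by simp
  also have "\<dots> \<le> D" using powr_pair_increment_outer[OF assms(1-4)] assms(6) by simp
  finally show ?thesis by simp
next
  case False
  then show ?thesis using assms(5) by simp
qed

lemma powr_pair_gap_far:
  fixes \<alpha> S c w w' D :: real
  assumes "1 < \<alpha>" "\<alpha> < 2" "S = 0 \<or> 1 \<le> S" "0 < c" "c * S \<le> w" "w \<le> w'" "0 \<le> D"
    and "powr_pair \<alpha> S w' - powr_pair \<alpha> S w \<le> D"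
  shows "w' - w \<le> 2 * D / (\<alpha> * (\<alpha> - 1) * c) + 2 * D + 2"
proof -
  have "0 \<le> S" "0 \<le> 2 * D / (\<alpha> * (\<alpha> - 1) * c)" using assms by auto
  then have "0 \<le> w" using assms(4,5) by (meson mult_nonneg_nonneg less_imp_le order_trans)
  consider "S \<le> w" | "w < S" "w' \<le> S" | "w < S" "S < w'" by linarith
  then show ?thesis
  proof cases
    case 1
    then show ?thesis using powr_pair_gap_outer[OF assms(1) \<open>0 \<le> S\<close> 1 assms(6-8)] \<open>0 \<le> 2 * D / _\<close>
      by linarith
  next
    case 2
    then have "1 \<le> S" using assms(3) \<open>0 \<le> w\<close> by auto
    then show ?thesis using powr_pair_gap_inner[OF assms(1,2) _ assms(4,5,6) 2(2) assms(8)] assms(7)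
      by linarith
  next
    case 3
    then have "1 \<le> S" using assms(3) \<open>0 \<le> w\<close> by auto
    have "powr_pair \<alpha> S w \<le> powr_pair \<alpha> S S" "powr_pair \<alpha> S S \<le> powr_pair \<alpha> S w'"
      using powr_pair_mono[OF assms(1,2) \<open>0 \<le> S\<close>] \<open>0 \<le> w\<close> 3 by auto
    then have "S - w \<le> 2 * D / (\<alpha> * (\<alpha> - 1) * c)" "w' - S \<le> 2 * D + 2"
      using powr_pair_gap_inner[OF assms(1,2) \<open>1 \<le> S\<close> assms(4,5), of S D]
        powr_pair_gap_outer[OF assms(1) \<open>0 \<le> S\<close> order_refl, of w' D] 3 assms(7,8) by auto
    then show ?thesis by linarith
  qed
qed

lemma powr_pair_gap_near:
  fixes \<alpha> S w w' D :: real
  assumes "1 < \<alpha>" "\<alpha> < 2" "0 < S" "0 \<le> w" "w \<le> w'" "w' \<le> S" "0 \<le> D"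
    and "powr_pair \<alpha> S w' - powr_pair \<alpha> S w \<le> D"
  shows "w' - w \<le> sqrt (4 * D / (\<alpha> * (\<alpha> - 1))) * S powr (1 - \<alpha> / 2)"
proof -
  define \<kappa> where "\<kappa> = \<alpha> * (\<alpha> - 1) * S powr (\<alpha> - 2) / 4"
  have "0 < \<kappa>" unfolding \<kappa>_def using assms by simp
  have "\<kappa> * (w' - w)\<^sup>2 \<le> \<kappa> * (w'\<^sup>2 - w\<^sup>2)"
    using assms \<open>0 < \<kappa>\<close> by (intro mult_left_mono) (auto simp: power2_eq_square algebra_simps mult_left_mono)
  also have "\<dots> \<le> D"
    using powr_pair_increment_inner[OF assms(1-6)] assms(8) unfolding \<kappa>_def by simp
  finally have "(w' - w)\<^sup>2 \<le> 4 * D / (\<alpha> * (\<alpha> - 1)) * S powr (2 - \<alpha>)"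
    using \<open>0 < \<kappa>\<close> assms unfolding \<kappa>_def
    by (simp add: field_simps powr_diff powr_minus)
  then have "w' - w \<le> sqrt (4 * D / (\<alpha> * (\<alpha> - 1)) * S powr (2 - \<alpha>))"
    using assms by (simp add: real_le_rsqrt)
  also have "\<dots> = sqrt (4 * D / (\<alpha> * (\<alpha> - 1))) * S powr (1 - \<alpha> / 2)"
  proof -
    have "S powr (1 - \<alpha> / 2) = sqrt (S powr (2 - \<alpha>))"
      using assms powr_half_sqrt_powr[of S "2 - \<alpha>"] by (simp add: diff_divide_distrib)
    then show ?thesis by (simp only: real_sqrt_mult)
  qed
  finally show ?thesis .
qed

lemma card_int_set_le_diam:
  fixes W :: "int set" and L :: real
  assumes "\<And>a b. a \<in> W \<Longrightarrow> b \<in> W \<Longrightarrow> a \<le> b \<Longrightarrow> real_of_int (b - a) \<le> L" "0 \<le> L"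
  shows "finite W \<and> real (card W) \<le> 2 * L + 1"
proof (cases "W = {}")
  case True
  then show ?thesis using assms by simp
next
  case False
  then obtain a where "a \<in> W" by blast
  have "W \<subseteq> {a - \<lfloor>L\<rfloor>..a + \<lfloor>L\<rfloor>}"
  proof
    fix b assume "b \<in> W"
    then have "real_of_int \<bar>b - a\<bar> \<le> L"
      using assms(1)[OF \<open>a \<in> W\<close>] assms(1)[OF _ \<open>a \<in> W\<close>] by (cases "a \<le> b") auto
    then have "\<bar>b - a\<bar> \<le> \<lfloor>L\<rfloor>" by (simp add: le_floor_iff)
    then show "b \<in> {a - \<lfloor>L\<rfloor>..a + \<lfloor>L\<rfloor>}" by auto
  qed
  then have "finite W" "card W \<le> nat (2 * \<lfloor>L\<rfloor> + 1)"
    using card_mono[of "{a - \<lfloor>L\<rfloor>..a + \<lfloor>L\<rfloor>}" W] by (auto intro: finite_subset)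
  then show ?thesis using assms(2) by linarith
qed

lemma card_le_of_abs_spread:
  fixes T :: "int set" and s :: int and L :: real
  assumes "\<And>x y. x \<in> T \<Longrightarrow> y \<in> T \<Longrightarrow> \<bar>2 * x - s\<bar> \<le> \<bar>2 * y - s\<bar> \<Longrightarrow>
             real_of_int (\<bar>2 * y - s\<bar> - \<bar>2 * x - s\<bar>) \<le> L"
    and "0 \<le> L"
  shows "finite T \<and> real (card T) \<le> 4 * L + 2"
proof -
  define W where "W = (\<lambda>x. \<bar>2 * x - s\<bar>) ` T"
  have W: "finite W" "real (card W) \<le> 2 * L + 1"
    using card_int_set_le_diam[of W L] assms unfolding W_def by blast+
  have T_sub: "T \<subseteq> (\<lambda>w. (s + w) div 2) ` W \<union> (\<lambda>w. (s - w) div 2) ` W"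
  proof
    fix x assume "x \<in> T"
    then have "\<bar>2 * x - s\<bar> \<in> W" unfolding W_def by blast
    moreover have "x = (s + \<bar>2 * x - s\<bar>) div 2 \<or> x = (s - \<bar>2 * x - s\<bar>) div 2"
      by (cases "0 \<le> 2 * x - s") auto
    ultimately show "x \<in> (\<lambda>w. (s + w) div 2) ` W \<union> (\<lambda>w. (s - w) div 2) ` W" by blast
  qed
  then have "finite T" using W(1) by (auto intro: finite_subset)
  have "card T \<le> card ((\<lambda>w. (s + w) div 2) ` W \<union> (\<lambda>w. (s - w) div 2) ` W)"
    using T_sub W(1) by (intro card_mono) auto
  also have "\<dots> \<le> card W + card W"
    using card_Un_le card_image_le[OF W(1)] by (meson add_mono order_trans)
  finally show ?thesis using \<open>finite T\<close> W(2) by simp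
qed

definition level_set :: "real \<Rightarrow> real \<Rightarrow> int \<Rightarrow> real \<Rightarrow> int set" where
  "level_set \<alpha> C0 s B = {x. \<bar>powr_pair \<alpha> \<bar>real_of_int s\<bar> \<bar>real_of_int (2 * x - s)\<bar> - B\<bar> \<le> C0}"

definition far_count_bound :: "real \<Rightarrow> real \<Rightarrow> real \<Rightarrow> real" where
  "far_count_bound \<alpha> c C0 = 4 * (4 * C0 / (\<alpha> * (\<alpha> - 1) * c) + 4 * C0 + 2) + 2"

definition near_count_bound :: "real \<Rightarrow> real \<Rightarrow> real" where
  "near_count_bound \<alpha> C0 = 4 * sqrt (8 * C0 / (\<alpha> * (\<alpha> - 1))) + 2"

lemma card_far_level_set:
  fixes \<alpha> c C0 B :: real and s :: int
  assumes "1 < \<alpha>" "\<alpha> < 2" "0 < c" "0 \<le> C0"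
  defines "T \<equiv> {x \<in> level_set \<alpha> C0 s B. \<not> real_of_int \<bar>2 * x - s\<bar> < c * real_of_int \<bar>s\<bar>}"
  shows "finite T \<and> real (card T) \<le> far_count_bound \<alpha> c C0"
proof -
  define L where "L = 2 * (2 * C0) / (\<alpha> * (\<alpha> - 1) * c) + 2 * (2 * C0) + 2"
  have "finite T \<and> real (card T) \<le> 4 * L + 2"
  proof (rule card_le_of_abs_spread)
    fix x y assume "x \<in> T" "y \<in> T" and le: "\<bar>2 * x - s\<bar> \<le> \<bar>2 * y - s\<bar>"
    let ?S = "\<bar>real_of_int s\<bar>"
    have ph: "powr_pair \<alpha> ?S \<bar>real_of_int (2 * y - s)\<bar> - powr_pair \<alpha> ?S \<bar>real_of_int (2 * x - s)\<bar>
          \<le> 2 * C0"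
      and far: "c * ?S \<le> \<bar>real_of_int (2 * x - s)\<bar>"
      using \<open>x \<in> T\<close> \<open>y \<in> T\<close> unfolding T_def level_set_def
      by (auto simp: abs_le_iff simp del: of_int_diff of_int_mult)
    have S01: "?S = 0 \<or> 1 \<le> ?S" by (cases "s = 0") auto
    have "\<bar>real_of_int (2 * x - s)\<bar> \<le> \<bar>real_of_int (2 * y - s)\<bar>"
      using le by (metis of_int_abs of_int_le_iff)
    from powr_pair_gap_far[OF assms(1,2) S01 assms(3) far this _ ph] assms(4)
    have "\<bar>real_of_int (2 * y - s)\<bar> - \<bar>real_of_int (2 * x - s)\<bar> \<le> L"
      unfolding L_def by simp
    then show "real_of_int (\<bar>2 * y - s\<bar> - \<bar>2 * x - s\<bar>) \<le> L" by simp
  next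
    show "0 \<le> L" using assms unfolding L_def by simp
  qed
  then show ?thesis unfolding L_def far_count_bound_def by simp
qed

lemma card_near_level_set:
  fixes \<alpha> c C0 B :: real and s :: int
  assumes "1 < \<alpha>" "\<alpha> < 2" "c < 1" "0 \<le> C0"
  defines "T \<equiv> {x \<in> level_set \<alpha> C0 s B. real_of_int \<bar>2 * x - s\<bar> < c * real_of_int \<bar>s\<bar>}"
  shows "finite T \<and>
    real (card T) \<le> near_count_bound \<alpha> C0 * (\<bar>real_of_int s\<bar> powr (1 - \<alpha> / 2) + 1)"
proof -
  let ?S = "\<bar>real_of_int s\<bar>"
  define K where "K = sqrt (4 * (2 * C0) / (\<alpha> * (\<alpha> - 1)))"
  have "0 \<le> K" unfolding K_def using assms by simp
  have "finite T \<and> real (card T) \<le> 4 * (K * ?S powr (1 - \<alpha> / 2)) + 2"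
  proof (rule card_le_of_abs_spread)
    fix x y assume "x \<in> T" "y \<in> T" and le: "\<bar>2 * x - s\<bar> \<le> \<bar>2 * y - s\<bar>"
    have ph: "powr_pair \<alpha> ?S \<bar>real_of_int (2 * y - s)\<bar> - powr_pair \<alpha> ?S \<bar>real_of_int (2 * x - s)\<bar>
          \<le> 2 * C0"
      and near: "\<bar>real_of_int (2 * y - s)\<bar> < c * ?S"
      using \<open>x \<in> T\<close> \<open>y \<in> T\<close> unfolding T_def level_set_def
      by (auto simp: abs_le_iff simp del: of_int_diff of_int_mult)
    have "c * ?S \<le> ?S" using assms(3) mult_right_mono[of c 1 ?S] by simp
    have "0 < ?S" using near by (cases "?S = 0") auto
    have "\<bar>real_of_int (2 * x - s)\<bar> \<le> \<bar>real_of_int (2 * y - s)\<bar>"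
      using le by (metis of_int_abs of_int_le_iff)
    from powr_pair_gap_near[OF assms(1,2) \<open>0 < ?S\<close> _ this _ _ ph] near \<open>c * ?S \<le> ?S\<close> assms(4)
    have "\<bar>real_of_int (2 * y - s)\<bar> - \<bar>real_of_int (2 * x - s)\<bar> \<le> K * ?S powr (1 - \<alpha> / 2)"
      unfolding K_def by simp
    then show "real_of_int (\<bar>2 * y - s\<bar> - \<bar>2 * x - s\<bar>) \<le> K * ?S powr (1 - \<alpha> / 2)" by simp
  next
    show "0 \<le> K * ?S powr (1 - \<alpha> / 2)" using \<open>0 \<le> K\<close> by simp
  qed
  moreover have "4 * (K * ?S powr (1 - \<alpha> / 2)) + 2 \<le> (4 * K + 2) * (?S powr (1 - \<alpha> / 2) + 1)"
    using \<open>0 \<le> K\<close> by (simp add: algebra_simps)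
  ultimately show ?thesis unfolding near_count_bound_def K_def by simp
qed

lemma S_kk2_memD:
  assumes "(k1, k3) \<in> S_kk2 \<alpha> m C0 N N1 N2 N3 k k2"
  shows "k3 = k + k2 - k1 \<and>
    k1 \<in> level_set \<alpha> C0 (k + k2) (\<bar>real_of_int k\<bar> powr \<alpha> + \<bar>real_of_int k2\<bar> powr \<alpha> + m)"
proof -
  have "k = k1 - k2 + k3" and res: "\<bar>\<bar>real_of_int k1\<bar> powr \<alpha> - \<bar>real_of_int k2\<bar> powr \<alpha>
      + \<bar>real_of_int k3\<bar> powr \<alpha> - \<bar>real_of_int k\<bar> powr \<alpha> - m\<bar> \<le> C0"
    using assms unfolding S_kk2_def Sset_def by auto
  moreover have "\<bar>real_of_int k1\<bar> powr \<alpha> + \<bar>real_of_int k3\<bar> powr \<alpha>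
      = powr_pair \<alpha> \<bar>real_of_int (k + k2)\<bar> \<bar>real_of_int (2 * k1 - (k + k2))\<bar>"
    using abs_powr_add_eq_powr_pair[of "real_of_int k1" \<alpha> "real_of_int (k + k2)"] \<open>k = _\<close> by simp
  ultimately show ?thesis unfolding level_set_def by (simp add: abs_le_iff)
qed

lemma card_le_card_of_graph:
  assumes "finite T" "\<And>a b. (a, b) \<in> A \<Longrightarrow> a \<in> T \<and> b = f a"
  shows "card A \<le> card T"
proof -
  have "A \<subseteq> (\<lambda>a. (a, f a)) ` T" using assms(2) by auto
  then have "card A \<le> card ((\<lambda>a. (a, f a)) ` T)" using assms(1) by (intro card_mono) auto
  also have "\<dots> \<le> card T" using assms(1) by (rule card_image_le)
  finally show ?thesis .
qed

lemma S_k1k3_eq_S_kk2: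
  "S_k1k3 \<alpha> m C0 N N1 N2 N3 k1 k3 = S_kk2 \<alpha> (- m) C0 N1 N N3 N2 k1 k3"
  unfolding S_k1k3_def S_kk2_def Sset_def by (auto simp: abs_le_iff)

lemma S_k1k3_good_eq_S_kk2_good:
  "S_k1k3_good \<alpha> c m C0 N N1 N2 N3 k1 k3 = S_kk2_good \<alpha> c (- m) C0 N1 N N3 N2 k1 k3"
  unfolding S_k1k3_good_def S_kk2_good_def S_k1k3_bad_def S_kk2_bad_def S_k1k3_eq_S_kk2 ..

lemma S_k1k3_bad_eq_S_kk2_bad:
  "S_k1k3_bad \<alpha> c m C0 N N1 N2 N3 k1 k3 = S_kk2_bad \<alpha> c (- m) C0 N1 N N3 N2 k1 k3"
  unfolding S_k1k3_bad_def S_kk2_bad_def S_k1k3_eq_S_kk2 ..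

lemma card_S_kk2_good_le:
  assumes "1 < \<alpha>" "\<alpha> < 2" "0 < c" "0 \<le> C0"
  shows "real (card (S_kk2_good \<alpha> c m C0 N N1 N2 N3 k k2)) \<le> far_count_bound \<alpha> c C0"
proof -
  let ?T = "{x \<in> level_set \<alpha> C0 (k + k2) (\<bar>real_of_int k\<bar> powr \<alpha> + \<bar>real_of_int k2\<bar> powr \<alpha> + m).
             \<not> real_of_int \<bar>2 * x - (k + k2)\<bar> < c * real_of_int \<bar>k + k2\<bar>}"
  have T: "finite ?T \<and> real (card ?T) \<le> far_count_bound \<alpha> c C0"
    by (rule card_far_level_set[OF assms])
  have "card (S_kk2_good \<alpha> c m C0 N N1 N2 N3 k k2) \<le> card ?T"
    using T by (intro card_le_card_of_graph[where f = "\<lambda>k1. k + k2 - k1"])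
      (auto simp: S_kk2_good_def S_kk2_bad_def dest: S_kk2_memD)
  with T show ?thesis by linarith
qed

lemma card_S_kk2_bad_le:
  assumes "1 < \<alpha>" "\<alpha> < 2" "c < 1" "0 \<le> C0"
  shows "real (card (S_kk2_bad \<alpha> c m C0 N N1 N2 N3 k k2))
    \<le> near_count_bound \<alpha> C0 * (\<bar>real_of_int (k + k2)\<bar> powr (1 - \<alpha> / 2) + 1)"
proof -
  let ?T = "{x \<in> level_set \<alpha> C0 (k + k2) (\<bar>real_of_int k\<bar> powr \<alpha> + \<bar>real_of_int k2\<bar> powr \<alpha> + m).
             real_of_int \<bar>2 * x - (k + k2)\<bar> < c * real_of_int \<bar>k + k2\<bar>}"
  have T: "finite ?T \<and>
      real (card ?T) \<le> near_count_bound \<alpha> C0 * (\<bar>real_of_int (k + k2)\<bar> powr (1 - \<alpha> / 2) + 1)"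
    by (rule card_near_level_set[OF assms])
  have "card (S_kk2_bad \<alpha> c m C0 N N1 N2 N3 k k2) \<le> card ?T"
    using T by (intro card_le_card_of_graph[where f = "\<lambda>k1. k + k2 - k1"])
      (auto simp: S_kk2_bad_def dest: S_kk2_memD)
  with T show ?thesis by linarith
qed

theorem lemma2p7:
  fixes \<alpha> c C0 :: real
  assumes "1 < \<alpha>" "\<alpha> < 2" "0 < c" "c < 1" "0 < C0"
  shows "\<exists>C::real. \<forall>(N::nat) N1 N2 N3 (m::real).
    dyadic N \<and> dyadic N1 \<and> dyadic N2 \<and> dyadic N3 \<and> N1 \<le> N \<and> N2 \<le> N \<and> N3 \<le> N \<longrightarrow>
    (\<forall>k k2. real (card (S_kk2_good \<alpha> c m C0 N N1 N2 N3 k k2)) \<le> C) \<and>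
    (\<forall>k1 k3. real (card (S_k1k3_good \<alpha> c m C0 N N1 N2 N3 k1 k3)) \<le> C) \<and>
    (\<forall>k k2. real (card (S_kk2_bad \<alpha> c m C0 N N1 N2 N3 k k2))
        \<le> C * (\<bar>real_of_int (k + k2)\<bar> powr (1 - \<alpha>/2) + 1)) \<and>
    (\<forall>k1 k3. real (card (S_k1k3_bad \<alpha> c m C0 N N1 N2 N3 k1 k3))
        \<le> C * (\<bar>real_of_int (k1 + k3)\<bar> powr (1 - \<alpha>/2) + 1))"
proof -
  define C where "C = max (far_count_bound \<alpha> c C0) (near_count_bound \<alpha> C0)"
  have good: "real (card (S_kk2_good \<alpha> c m C0 N N1 N2 N3 k k2)) \<le> C" for m N N1 N2 N3 k k2
    using card_S_kk2_good_le[OF assms(1-3)] assms(5) unfolding C_def by (smt (verit))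
  have bad: "real (card (S_kk2_bad \<alpha> c m C0 N N1 N2 N3 k k2))
      \<le> C * (\<bar>real_of_int (k + k2)\<bar> powr (1 - \<alpha>/2) + 1)" for m N N1 N2 N3 k k2
  proof -
    have "near_count_bound \<alpha> C0 * (\<bar>real_of_int (k + k2)\<bar> powr (1 - \<alpha>/2) + 1)
        \<le> C * (\<bar>real_of_int (k + k2)\<bar> powr (1 - \<alpha>/2) + 1)"
      unfolding C_def by (intro mult_right_mono) auto
    with card_S_kk2_bad_le[OF assms(1,2,4)] assms(5) show ?thesis by (smt (verit))
  qed
  show ?thesis
    by (intro exI[of _ C] allI impI conjI good bad)
      (simp_all only: S_k1k3_good_eq_S_kk2_good S_k1k3_bad_eq_S_kk2_bad good bad)
qed

end
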